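(* Let $q$ be an odd prime power, let $d\in\mathbb{N}$ be even with $d\mid(q-1)$ and $(q-1)/d$ odd. Let $h\in\mathbb{F}_q[x]$, $T(x)=x^{(q-1)/d}$ and $f(x)=x^2h(T(x))$. If $f$ is a permutation polynomial of $\mathbb{F}_q$, then $\delta_f\le 2d^2-\tfrac{3}{2}d$.
   Context: A polynomial $f\in\mathbb{F}_q[x]$ is a permutation polynomial of $\mathbb{F}_q$ if $c\mapsto f(c)$ is a bijection of $\mathbb{F}_q$. For $a\in\mathbb{F}_q^*$, $\Delta_{f,a}(x)=f(x+a)-f(x)$, and the differential uniformity is $\delta_f=\max_{a\in\mathbb{F}_q^*,\,c\in\mathbb{F}_q}|\{x\in\mathbb{F}_q:\Delta_{f,a}(x)=c\}|$. *)

theory Defs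
  imports "HOL-Computational_Algebra.Polynomial"
begin

definition diff_uniformity :: "('a::{finite,ring_1} \<Rightarrow> 'a) \<Rightarrow> nat" where
  "diff_uniformity f =
     Max {card {x. f (x + a) - f x = c} | a c. a \<noteq> 0}"

definition permutation_poly :: "('a::{finite,comm_ring_1}) poly \<Rightarrow> bool" where
  "permutation_poly p \<longleftrightarrow> bij (poly p)"

end

theory Submission
  imports Defs
begin

text \<open>Write \<open>f x = x\<^sup>2 H(x\<^sup>s)\<close> with \<open>s = (q - 1)/d\<close> odd. Away from \<open>x = 0\<close> and \<open>x = -a\<close>, a solution
  of \<open>f(x + a) - f(x) = c\<close> determines the class \<open>(w\<^sub>1, w\<^sub>2) = (x\<^sup>s, (x + a)\<^sup>s)\<close> of \<open>d\<close>-th roots of unity,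
  and within a class the equation \<open>H(w\<^sub>2)(x + a)\<^sup>2 - H(w\<^sub>1)x\<^sup>2 = c\<close> is quadratic, so each class holds at
  most two solutions; diagonal classes are linear and hold at most one. Since \<open>s\<close> is odd, the roots
  of unity come in pairs \<open>\<plusminus>w\<close>. If both classes \<open>(w, -w)\<close> and \<open>(-w, w)\<close> hold two solutions, Vieta's
  formulas give \<open>(c \<mp> a\<^sup>2H(\<plusminus>w))\<^sup>s = \<plusminus>K\<close> with \<open>K \<noteq> 0\<close>, which forces both diagonal classes \<open>(\<plusminus>w, \<plusminus>w)\<close>
  to be empty. So the four classes built from \<open>\<plusminus>w\<close> hold at most five solutions, and summing over the
  pairs gives \<open>2\<delta> \<le> d(4d - 3)\<close>.\<close>

lemma of_nat_card_UNIV_eq_0: "of_nat (card (UNIV :: 'a::{finite,ring_1} set)) = (0::'a)"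
proof -
  have "(\<Sum>y::'a\<in>UNIV. y + 1) = (\<Sum>y\<in>UNIV. y)"
    by (rule sum.reindex_bij_witness[of _ "\<lambda>y. y - 1" "\<lambda>y. y + 1"]) auto
  then show ?thesis
    by (simp add: sum.distrib)
qed

lemma odd_card_imp_two_neq_zero:
  assumes "odd (card (UNIV :: 'a::{finite,ring_1} set))"
  shows "(2::'a) \<noteq> 0"
proof
  assume "(2::'a) = 0"
  from assms obtain m where "card (UNIV :: 'a set) = 2 * m + 1"
    by (rule oddE)
  with of_nat_card_UNIV_eq_0[where 'a='a] have "of_nat (2 * m + 1) = (0::'a)"
    by simp
  with \<open>(2::'a) = 0\<close> show False
    by simp
qed

lemma power_card_minus_one_eq_1:
  fixes x :: "'a::{finite,field}"
  assumes "x \<noteq> 0"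
  shows "x ^ (card (UNIV :: 'a set) - 1) = 1"
proof -
  let ?U = "UNIV - {0::'a}"
  have "(\<Prod>y\<in>?U. x * y) = \<Prod>?U"
    by (rule prod.reindex_bij_witness[of _ "\<lambda>y. y / x" "\<lambda>y. x * y"]) (use assms in auto)
  then have "x ^ card ?U * \<Prod>?U = 1 * \<Prod>?U"
    by (simp add: prod.distrib)
  moreover have "\<Prod>?U \<noteq> 0"
    by simp
  ultimately show ?thesis
    by (simp add: card_Diff_subset)
qed

lemma card_power_eq_1_le:
  fixes n :: nat
  assumes "n > 0"
  shows "card {x::'a::idom. x ^ n = 1} \<le> n"
proof -
  let ?p = "monom (1::'a) n - 1"
  have "coeff ?p n = 1"
    using assms by (simp add: coeff_monom)
  then have "?p \<noteq> 0"
    by (metis coeff_0 zero_neq_one)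
  then have "card {x. poly ?p x = 0} \<le> degree ?p"
    by (rule card_poly_roots_bound)
  also have "degree ?p \<le> n"
    by (rule degree_diff_le) (auto simp: degree_monom_le)
  finally show ?thesis
    by (simp add: poly_monom)
qed

lemma card_quadratic_roots_le_2:
  fixes A B C :: "'a::idom"
  assumes "B \<noteq> 0"
  shows "card {x. A * x\<^sup>2 + B * x + C = 0} \<le> 2"
proof -
  let ?p = "[:C, B, A:]"
  have "?p \<noteq> 0"
    using assms by auto
  then have "card {x. poly ?p x = 0} \<le> degree ?p"
    by (rule card_poly_roots_bound)
  also have "degree ?p \<le> 2"
    by (simp add: degree_pCons_le)
  finally show ?thesis
    by (simp add: algebra_simps power2_eq_square)
qed

lemma self_eq_uminus_iff:
  fixes x :: "'a::idom"
  assumes "(2::'a) \<noteq> 0"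
  shows "x = - x \<longleftrightarrow> x = 0"
proof -
  have "x = - x \<longleftrightarrow> x + x = 0"
    by (rule eq_neg_iff_add_eq_0)
  also have "x + x = 2 * x"
    by (rule mult_2[symmetric])
  finally show ?thesis
    using assms by simp
qed

lemma quadratic_roots_vieta:
  fixes A B C x y :: "'a::idom"
  assumes "x \<noteq> y" "A * x\<^sup>2 + B * x + C = 0" "A * y\<^sup>2 + B * y + C = 0"
  shows "A * (x + y) = - B" "A * (x * y) = C"
proof -
  have "(x - y) * (A * (x + y) + B) = (A * x\<^sup>2 + B * x + C) - (A * y\<^sup>2 + B * y + C)"
    by (simp add: algebra_simps power2_eq_square)
  with assms show sum: "A * (x + y) = - B"
    by (simp add: eq_neg_iff_add_eq_0)
  with assms(2) show "A * (x * y) = C"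
    by algebra
qed

lemma diff_uniformity_attained:
  fixes f :: "'a::{finite,ring_1} \<Rightarrow> 'a"
  obtains a c where "a \<noteq> 0" "diff_uniformity f = card {x. f (x + a) - f x = c}"
proof -
  let ?S = "{card {x. f (x + a) - f x = c} | a c. a \<noteq> 0}"
  have "?S = (\<lambda>(a, c). card {x. f (x + a) - f x = c}) ` ({a. a \<noteq> 0} \<times> UNIV)"
    by auto
  then have "finite ?S"
    by simp
  have "card {x. f (x + 1) - f x = 0} \<in> ?S"
    using one_neq_zero by blast
  with \<open>finite ?S\<close> have "Max ?S \<in> ?S"
    by (intro Max_in) auto
  with that show ?thesis
    unfolding diff_uniformity_def by auto
qed

definition nonzero_powers :: "nat \<Rightarrow> 'a::field set" where
  "nonzero_powers s = (\<lambda>x. x ^ s) ` (- {0})"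

lemma zero_notin_nonzero_powers: "s > 0 \<Longrightarrow> 0 \<notin> nonzero_powers s"
  by (auto simp: nonzero_powers_def)

lemma uminus_in_nonzero_powers:
  assumes "odd s" "w \<in> nonzero_powers s"
  shows "- w \<in> nonzero_powers s"
proof -
  from assms(2) obtain x where "x \<noteq> 0" "w = x ^ s"
    by (auto simp: nonzero_powers_def)
  with assms(1) have "- x \<noteq> 0" "- w = (- x) ^ s"
    by simp_all
  then show ?thesis
    unfolding nonzero_powers_def by blast
qed

lemma card_nonzero_powers_le:
  assumes "s * d = card (UNIV :: 'a::{finite,field} set) - 1"
  shows "card (nonzero_powers s :: 'a set) \<le> d"
proof -
  have "card (UNIV :: 'a set) \<ge> 2"
    using card_mono[of UNIV "{0::'a, 1}"] by simp
  with assms have "d > 0"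
    by (intro Nat.gr0I) simp
  have "nonzero_powers s \<subseteq> {w::'a. w ^ d = 1}"
    using power_card_minus_one_eq_1 assms(1)
    by (auto simp: nonzero_powers_def power_mult[symmetric])
  then have "card (nonzero_powers s :: 'a set) \<le> card {w::'a. w ^ d = 1}"
    by (intro card_mono) simp_all
  also have "\<dots> \<le> d"
    using \<open>d > 0\<close> by (rule card_power_eq_1_le)
  finally show ?thesis .
qed

locale difference_equation =
  fixes H :: "'a::{finite,field} \<Rightarrow> 'a" and s :: nat and a c :: 'a
  assumes odd_s: "odd s"
    and two_neq_zero: "(2::'a) \<noteq> 0"
    and a_neq_zero: "a \<noteq> 0"
    and H_power_neq_zero: "x \<noteq> 0 \<Longrightarrow> H (x ^ s) \<noteq> 0"
begin

abbreviation W :: "'a set" where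
  "W \<equiv> nonzero_powers s"

definition f :: "'a \<Rightarrow> 'a" where
  "f x = x\<^sup>2 * H (x ^ s)"

text \<open>The solutions \<open>x = 0\<close> and \<open>x = -a\<close>, which have no class of their own, are put into the
  diagonal class of the other endpoint; there the equation is linear in \<open>x\<close>, so they are still
  counted at most once.\<close>

definition class_solutions :: "'a \<Rightarrow> 'a \<Rightarrow> 'a set" where
  "class_solutions w\<^sub>1 w\<^sub>2 =
     {x. (x ^ s = w\<^sub>1 \<or> x = 0 \<and> w\<^sub>1 = w\<^sub>2) \<and> ((x + a) ^ s = w\<^sub>2 \<or> x + a = 0 \<and> w\<^sub>1 = w\<^sub>2)
         \<and> H w\<^sub>2 * (x + a)\<^sup>2 - H w\<^sub>1 * x\<^sup>2 = c}"

definition row_count :: "'a \<Rightarrow> nat" where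
  "row_count w = (\<Sum>w'\<in>W. card (class_solutions w w'))"

lemma s_pos: "s > 0"
  using odd_s by (cases s) simp_all

lemma H_neq_zero: "w \<in> W \<Longrightarrow> H w \<noteq> 0"
  using H_power_neq_zero by (auto simp: nonzero_powers_def)

lemma uminus_neq_self: "w \<in> W \<Longrightarrow> - w \<noteq> w"
  using self_eq_uminus_iff[OF two_neq_zero, of w] zero_notin_nonzero_powers[OF s_pos] by auto

lemma class_solutions_eq:
  "H w\<^sub>2 * (x + a)\<^sup>2 - H w\<^sub>1 * x\<^sup>2 = c \<longleftrightarrow>
     (H w\<^sub>2 - H w\<^sub>1) * x\<^sup>2 + (2 * a * H w\<^sub>2) * x + (a\<^sup>2 * H w\<^sub>2 - c) = 0"
proof -
  have expand: "(H w\<^sub>2 - H w\<^sub>1) * x\<^sup>2 + (2 * a * H w\<^sub>2) * x + (a\<^sup>2 * H w\<^sub>2 - c)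
      = (H w\<^sub>2 * (x + a)\<^sup>2 - H w\<^sub>1 * x\<^sup>2) - c"
    by (simp add: algebra_simps power2_eq_square)
  show ?thesis
    unfolding expand by (rule eq_iff_diff_eq_0)
qed

lemma card_class_solutions_le_2:
  assumes "w\<^sub>2 \<in> W"
  shows "card (class_solutions w\<^sub>1 w\<^sub>2) \<le> 2"
proof -
  have "class_solutions w\<^sub>1 w\<^sub>2 \<subseteq>
          {x. (H w\<^sub>2 - H w\<^sub>1) * x\<^sup>2 + (2 * a * H w\<^sub>2) * x + (a\<^sup>2 * H w\<^sub>2 - c) = 0}"
    unfolding class_solutions_def class_solutions_eq by blast
  then have "card (class_solutions w\<^sub>1 w\<^sub>2) \<le>
          card {x. (H w\<^sub>2 - H w\<^sub>1) * x\<^sup>2 + (2 * a * H w\<^sub>2) * x + (a\<^sup>2 * H w\<^sub>2 - c) = 0}"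
    by (intro card_mono) simp_all
  also have "\<dots> \<le> 2"
    using two_neq_zero a_neq_zero H_neq_zero[OF assms] by (intro card_quadratic_roots_le_2) simp
  finally show ?thesis .
qed

lemma card_diagonal_class_le_1:
  assumes "w \<in> W"
  shows "card (class_solutions w w) \<le> 1"
proof -
  let ?m = "2 * a * H w"
  have "?m \<noteq> 0"
    using two_neq_zero a_neq_zero H_neq_zero[OF assms] by simp
  have lin: "?m * x + (a\<^sup>2 * H w - c) = 0" if "x \<in> class_solutions w w" for x
    using that unfolding class_solutions_def class_solutions_eq by simp
  have "x = y" if "x \<in> class_solutions w w" "y \<in> class_solutions w w" for x y
  proof -
    have "?m * x = ?m * y"
      using lin[OF that(1)] lin[OF that(2)] by (simp add: eq_neg_iff_add_eq_0[symmetric])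
    with \<open>?m \<noteq> 0\<close> show "x = y"
      by simp
  qed
  then show ?thesis
    by (simp add: card_le_Suc0_iff_eq)
qed

lemma off_diagonal_class_pair:
  assumes "w\<^sub>1 \<in> W" "w\<^sub>2 \<in> W" "w\<^sub>1 \<noteq> w\<^sub>2"
    and "x \<noteq> y" "x \<in> class_solutions w\<^sub>1 w\<^sub>2" "y \<in> class_solutions w\<^sub>1 w\<^sub>2"
  shows "H w\<^sub>1 \<noteq> H w\<^sub>2"
    and "(c - a\<^sup>2 * H w\<^sub>2) ^ s = (H w\<^sub>1 - H w\<^sub>2) ^ s * w\<^sub>1\<^sup>2"
    and "(c + a\<^sup>2 * H w\<^sub>1) ^ s = (H w\<^sub>1 - H w\<^sub>2) ^ s * w\<^sub>2\<^sup>2"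
proof -
  from assms(3,5,6) have pow: "x ^ s = w\<^sub>1" "y ^ s = w\<^sub>1" "(x + a) ^ s = w\<^sub>2" "(y + a) ^ s = w\<^sub>2"
    and eq: "H w\<^sub>2 * (x + a)\<^sup>2 - H w\<^sub>1 * x\<^sup>2 = c" "H w\<^sub>2 * (y + a)\<^sup>2 - H w\<^sub>1 * y\<^sup>2 = c"
    by (auto simp: class_solutions_def)
  note vieta_x = quadratic_roots_vieta[OF assms(4) eq[unfolded class_solutions_eq]]
  show "H w\<^sub>1 \<noteq> H w\<^sub>2"
    using vieta_x(1) two_neq_zero a_neq_zero H_neq_zero[OF assms(2)] by auto
  have "(H w\<^sub>1 - H w\<^sub>2) * (x * y) = c - a\<^sup>2 * H w\<^sub>2"
    using vieta_x(2) by (simp add: algebra_simps)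
  then show "(c - a\<^sup>2 * H w\<^sub>2) ^ s = (H w\<^sub>1 - H w\<^sub>2) ^ s * w\<^sub>1\<^sup>2"
    by (metis pow(1,2) power_mult_distrib power2_eq_square)
  have "(H w\<^sub>2 - H w\<^sub>1) * u\<^sup>2 + (2 * a * H w\<^sub>1) * u + - (a\<^sup>2 * H w\<^sub>1 + c) = 0"
    if "H w\<^sub>2 * u\<^sup>2 - H w\<^sub>1 * (u - a)\<^sup>2 = c" for u
    using that by (auto simp: algebra_simps power2_eq_square)
  with eq have "(H w\<^sub>2 - H w\<^sub>1) * (x + a)\<^sup>2 + (2 * a * H w\<^sub>1) * (x + a) + - (a\<^sup>2 * H w\<^sub>1 + c) = 0"
      "(H w\<^sub>2 - H w\<^sub>1) * (y + a)\<^sup>2 + (2 * a * H w\<^sub>1) * (y + a) + - (a\<^sup>2 * H w\<^sub>1 + c) = 0"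
    by simp_all
  from quadratic_roots_vieta(2)[OF _ this] assms(4)
  have "(H w\<^sub>1 - H w\<^sub>2) * ((x + a) * (y + a)) = c + a\<^sup>2 * H w\<^sub>1"
    by (simp add: algebra_simps)
  then show "(c + a\<^sup>2 * H w\<^sub>1) ^ s = (H w\<^sub>1 - H w\<^sub>2) ^ s * w\<^sub>2\<^sup>2"
    by (metis pow(3,4) power_mult_distrib power2_eq_square)
qed

lemma diagonal_class_empty:
  assumes "w \<in> W" and K: "(c - a\<^sup>2 * H w) ^ s = - ((c + a\<^sup>2 * H w) ^ s)" "(c + a\<^sup>2 * H w) ^ s \<noteq> 0"
  shows "class_solutions w w = {}"
proof (rule ccontr)
  assume "class_solutions w w \<noteq> {}"
  then obtain x where x: "x \<in> class_solutions w w"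
    by blast
  let ?m = "2 * a * H w"
  from x have lin: "?m * x = c - a\<^sup>2 * H w" "?m * (x + a) = c + a\<^sup>2 * H w"
    by (auto simp: class_solutions_def algebra_simps power2_eq_square)
  have "x \<noteq> 0" "x + a \<noteq> 0"
    using lin K s_pos by (auto simp: power_0_left)
  with x have "x ^ s = w" "(x + a) ^ s = w"
    by (auto simp: class_solutions_def)
  then have "(c - a\<^sup>2 * H w) ^ s = (c + a\<^sup>2 * H w) ^ s"
    by (metis lin power_mult_distrib)
  with K show False
    using self_eq_uminus_iff[OF two_neq_zero] by simp
qed

lemma card_antipodal_classes_le_5:
  assumes w: "w \<in> W"
  shows "card (class_solutions w w) + card (class_solutions (- w) (- w))
           + card (class_solutions w (- w)) + card (class_solutions (- w) w) \<le> 5"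
proof -
  have mw: "- w \<in> W"
    using uminus_in_nonzero_powers[OF odd_s w] .
  note diag = card_diagonal_class_le_1[OF w] card_diagonal_class_le_1[OF mw]
  note off = card_class_solutions_le_2[OF mw, of w] card_class_solutions_le_2[OF w, of "- w"]
  show ?thesis
  proof (cases "card (class_solutions w (- w)) \<le> 1 \<or> card (class_solutions (- w) w) \<le> 1")
    case True
    then show ?thesis
      using diag off by linarith
  next
    case False
    then obtain x y x' y' where
      "x \<noteq> y" "x \<in> class_solutions w (- w)" "y \<in> class_solutions w (- w)"
      "x' \<noteq> y'" "x' \<in> class_solutions (- w) w" "y' \<in> class_solutions (- w) w"
      by (auto simp: card_le_Suc0_iff_eq)
    note p = off_diagonal_class_pair[OF w mw uminus_neq_self[OF w, symmetric] this(1-3)]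
      and p' = off_diagonal_class_pair[OF mw w uminus_neq_self[OF w] this(4-6)]
    define K where "K = (H w - H (- w)) ^ s * w\<^sup>2"
    have "K \<noteq> 0"
      using p(1) uminus_neq_self[OF w] by (auto simp: K_def)
    have "(H (- w) - H w) ^ s = - ((H w - H (- w)) ^ s)"
      using odd_s by (metis minus_diff_eq power_minus_odd)
    then have "(c - a\<^sup>2 * H w) ^ s = - K" "(c + a\<^sup>2 * H w) ^ s = K"
      "(c - a\<^sup>2 * H (- w)) ^ s = K" "(c + a\<^sup>2 * H (- w)) ^ s = - K"
      using p(2,3) p'(2,3) by (simp_all add: K_def)
    with \<open>K \<noteq> 0\<close> have "class_solutions w w = {}" "class_solutions (- w) (- w) = {}"
      using diagonal_class_empty[OF w] diagonal_class_empty[OF mw] by simp_all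
    then show ?thesis
      using off by simp
  qed
qed

lemma row_count_antipodal_le:
  assumes w: "w \<in> W"
  shows "row_count w + row_count (- w) \<le> 4 * card W - 3"
proof -
  have mw: "- w \<in> W"
    using uminus_in_nonzero_powers[OF odd_s w] .
  let ?R = "W - {w, - w}"
  have pair: "{w, - w} \<subseteq> W" and card_pair: "card {w, - w} = 2"
    using w mw uminus_neq_self[OF w] by auto
  then have card_R: "card ?R = card W - 2"
    by (simp add: card_Diff_subset)
  have split: "row_count v = card (class_solutions v w) + card (class_solutions v (- w))
      + (\<Sum>w'\<in>?R. card (class_solutions v w'))" for v
    unfolding row_count_def using sum.subset_diff[OF pair] uminus_neq_self[OF w] by (simp add: ac_simps)
  have rest: "(\<Sum>w'\<in>?R. card (class_solutions v w')) \<le> 2 * (card W - 2)" for v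
    using sum_bounded_above[of ?R "\<lambda>w'. card (class_solutions v w')" 2]
      card_class_solutions_le_2 card_R by (simp add: mult.commute)
  have "card W \<ge> 2"
    using card_mono[OF _ pair] card_pair by simp
  then show ?thesis
    using split[of w] split[of "- w"] rest[of w] rest[of "- w"] card_antipodal_classes_le_5[OF w]
    by linarith
qed

lemma solutions_subset_classes:
  "{x. f (x + a) - f x = c} \<subseteq> (\<Union>(w\<^sub>1, w\<^sub>2)\<in>W \<times> W. class_solutions w\<^sub>1 w\<^sub>2)"
proof
  fix x assume "x \<in> {x. f (x + a) - f x = c}"
  then have eq: "H ((x + a) ^ s) * (x + a)\<^sup>2 - H (x ^ s) * x\<^sup>2 = c"
    by (simp add: f_def mult.commute)
  have in_W: "y ^ s \<in> W" if "y \<noteq> 0" for y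
    using that by (auto simp: nonzero_powers_def)
  have in_classes: "x \<in> (\<Union>(w\<^sub>1, w\<^sub>2)\<in>W \<times> W. class_solutions w\<^sub>1 w\<^sub>2)"
    if "x \<in> class_solutions w\<^sub>1 w\<^sub>2" "w\<^sub>1 \<in> W" "w\<^sub>2 \<in> W" for w\<^sub>1 w\<^sub>2
    using that by blast
  consider "x = 0" | "x = - a" | "x \<noteq> 0" "x + a \<noteq> 0"
    by (metis add_eq_0_iff2)
  then show "x \<in> (\<Union>(w\<^sub>1, w\<^sub>2)\<in>W \<times> W. class_solutions w\<^sub>1 w\<^sub>2)"
  proof cases
    case 1
    show ?thesis
      by (rule in_classes[of "a ^ s" "a ^ s"])
        (use 1 eq a_neq_zero in_W in \<open>simp_all add: class_solutions_def\<close>)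
  next
    case 2
    show ?thesis
      by (rule in_classes[of "(- a) ^ s" "(- a) ^ s"])
        (use 2 eq a_neq_zero in_W s_pos in \<open>simp_all add: class_solutions_def\<close>)
  next
    case 3
    show ?thesis
      by (rule in_classes) (use 3 eq in_W in \<open>simp_all add: class_solutions_def\<close>)
  qed
qed

theorem card_solutions_le:
  "2 * card {x. f (x + a) - f x = c} \<le> card W * (4 * card W - 3)"
proof -
  have "card {x. f (x + a) - f x = c} \<le> card (\<Union>(w\<^sub>1, w\<^sub>2)\<in>W \<times> W. class_solutions w\<^sub>1 w\<^sub>2)"
    by (intro card_mono solutions_subset_classes) simp
  also have "\<dots> \<le> (\<Sum>(w\<^sub>1, w\<^sub>2)\<in>W \<times> W. card (class_solutions w\<^sub>1 w\<^sub>2))"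
    by (rule order.trans[OF card_UN_le]) (simp_all add: split_def)
  also have "\<dots> = (\<Sum>w\<in>W. row_count w)"
    by (simp add: row_count_def sum.cartesian_product)
  moreover have "(\<Sum>w\<in>W. row_count (- w)) = (\<Sum>w\<in>W. row_count w)"
    by (rule sum.reindex_bij_witness[of _ uminus uminus])
      (auto intro: uminus_in_nonzero_powers[OF odd_s])
  ultimately have "2 * card {x. f (x + a) - f x = c}
      \<le> (\<Sum>w\<in>W. row_count w) + (\<Sum>w\<in>W. row_count (- w))"
    by simp
  also have "\<dots> = (\<Sum>w\<in>W. row_count w + row_count (- w))"
    by (rule sum.distrib[symmetric])
  also have "\<dots> \<le> card W * (4 * card W - 3)"
    using sum_bounded_above[of W "\<lambda>w. row_count w + row_count (- w)"] row_count_antipodal_le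
    by simp
  finally show ?thesis .
qed

end

lemma permutation_poly_imp_poly_power_neq_0:
  fixes h :: "'a::{finite,comm_ring_1,ring_no_zero_divisors} poly"
  assumes "permutation_poly (monom 1 2 * pcompose h (monom 1 s))" "x \<noteq> 0"
  shows "poly h (x ^ s) \<noteq> 0"
proof
  let ?F = "poly (monom 1 2 * pcompose h (monom 1 s))"
  assume "poly h (x ^ s) = 0"
  then have "?F x = ?F 0"
    by (simp add: poly_pcompose poly_monom)
  moreover have "inj ?F"
    using assms(1) by (simp add: permutation_poly_def bij_def)
  ultimately have "x = 0"
    by (metis injD)
  with assms(2) show False ..
qed

lemma diff_uniformity_le:
  fixes h :: "'a::{finite,field} poly"
  assumes "odd s" "s * d = card (UNIV :: 'a set) - 1" "(2::'a) \<noteq> 0"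
    and perm: "permutation_poly (monom 1 2 * pcompose h (monom 1 s))"
  shows "2 * diff_uniformity (poly (monom 1 2 * pcompose h (monom 1 s))) \<le> d * (4 * d - 3)"
proof -
  let ?F = "poly (monom 1 2 * pcompose h (monom 1 s))"
  obtain a c where "a \<noteq> 0" and \<delta>: "diff_uniformity ?F = card {x. ?F (x + a) - ?F x = c}"
    by (rule diff_uniformity_attained)
  interpret difference_equation "poly h" s a c
    using assms \<open>a \<noteq> 0\<close> permutation_poly_imp_poly_power_neq_0[OF perm] by unfold_locales
  have "?F = f"
    by (simp add: fun_eq_iff f_def poly_pcompose poly_monom)
  have "card W \<le> d"
    using card_nonzero_powers_le[OF assms(2)] .
  then have "card W * (4 * card W - 3) \<le> d * (4 * d - 3)"
    by (intro mult_le_mono diff_le_mono) simp_all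
  with card_solutions_le show ?thesis
    unfolding \<delta> unfolding \<open>?F = f\<close> by (rule order.trans)
qed

theorem theorem1p4:
  fixes h :: "'a::{finite,field} poly" and d :: nat
  assumes q_odd_prime_power: "\<exists>(p::nat) k::nat. prime p \<and> odd p \<and> k > 0 \<and> card (UNIV :: 'a set) = p ^ k"
    and d_even: "even d"
    and d_dvd: "d dvd (card (UNIV :: 'a set) - 1)"
    and quot_odd: "odd ((card (UNIV :: 'a set) - 1) div d)"
    and perm: "permutation_poly
                 (monom 1 2 * pcompose h (monom 1 ((card (UNIV :: 'a set) - 1) div d)))"
  shows "real (diff_uniformity
                 (poly (monom 1 2 * pcompose h (monom 1 ((card (UNIV :: 'a set) - 1) div d)))))
           \<le> 2 * real d ^ 2 - 3 / 2 * real d"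
proof -
  let ?\<delta> = "diff_uniformity (poly (monom 1 2 * pcompose h (monom 1 ((card (UNIV :: 'a set) - 1) div d))))"
  have "odd (card (UNIV :: 'a set))"
    using q_odd_prime_power by auto
  then have "(2::'a) \<noteq> 0"
    by (rule odd_card_imp_two_neq_zero)
  moreover have "(card (UNIV :: 'a set) - 1) div d * d = card (UNIV :: 'a set) - 1"
    using d_dvd by simp
  ultimately have "2 * ?\<delta> \<le> d * (4 * d - 3)"
    using diff_uniformity_le quot_odd perm by blast
  then have "real (2 * ?\<delta>) \<le> real (d * (4 * d - 3))"
    by (rule of_nat_mono)
  also have "\<dots> = 2 * (2 * real d ^ 2 - 3 / 2 * real d)"
    by (cases d) (simp_all add: of_nat_diff power2_eq_square algebra_simps)
  finally show ?thesis
    by simp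
qed

end
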